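(* Let $G=(m,n,\boldsymbol{c},\boldsymbol{d},r_{\max},r_{\min})$ be an interbank lending game, let $\alpha\in(0,1]$, and let $\boldsymbol{s}^1\in\boldsymbol{S}$ be any initial strategy profile. Then the randomised $\alpha$-uniform best-response dynamics $(\boldsymbol{s}^t)_{t\in\mathbb{N}}$ started at $\boldsymbol{s}^1$ converges almost surely to the unique pure Nash equilibrium $\boldsymbol{s}^*$ of $G$.
   Context: An interbank lending game $G=(m,n,\boldsymbol{c},\boldsymbol{d},r_{\max},r_{\min})$ consists of positive integers $m,n$, budgets $\boldsymbol{c}\in\mathbb{R}_{>0}^m$, demands $\boldsymbol{d}\in\mathbb{R}_{>0}^n$ and reals $0<r_{\min}<r_{\max}$. The players are the lenders $L=\{1,\dots,m\}$; $B=\{1,\dots,n\}$ is the set of borrowers. Lender $i$'s strategy set is $S_i=\{s_i\in\mathbb{R}_{\ge0}^n:\sum_{j\in B}s_{ij}\le c_i\}$, the strategy space is $\boldsymbol{S}=\prod_{i\in L}S_i$ with elements $\boldsymbol{s}=(s_{ij})$. The interest rate of borrower $j$ is $r_j(\boldsymbol{s})=(r_{\min}-r_{\max})\frac{\sum_{i\in L}s_{ij}}{d_j}+r_{\max}$ and lender $i$'s utility is $u_i(\boldsymbol{s})=\sum_{j\in B}(r_j(\boldsymbol{s})-r_{\min})s_{ij}$. A pure Nash equilibrium is $\boldsymbol{s}^*\in\boldsymbol{S}$ with $u_i(\boldsymbol{s}^* )\ge u_i(s_i,\boldsymbol{s}^*_{-i})$ for all $i\in L$, $s_i\in S_i$;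 $G$ has exactly one. For $\boldsymbol{s}\in\boldsymbol{S}$, lender $i$'s best-response set is $\mathrm{BR}_i(\boldsymbol{s})=\arg\max\{u_i(z_i,\boldsymbol{s}_{-i}):z_i\in S_i\}$. In the randomised $\alpha$-uniform best-response dynamics, at each time step $t$ the updating lender $i^t\in L$ is drawn at random according to a given probability distribution $\pi^t$ on $L$ (independently of the earlier draws), where there is a constant $p_{\min}>0$ with $\pi^t(i)\ge p_{\min}$ for all $t$ and all $i\in L$; then $\boldsymbol{s}^{t+1}=(s^{t+1}_{i^t},\boldsymbol{s}^t_{-i^t})$ with $s^{t+1}_{i^t}=s^t_{i^t}+\alpha(\hat s^t_{i^t}-s^t_{i^t})$ for some $\hat s^t_{i^t}\in\mathrm{BR}_{i^t}(\boldsymbol{s}^t)$. Convergence means $\boldsymbol{s}^t\to\boldsymbol{s}^*$ as $t\to\infty$. *)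

theory Defs
  imports "HOL-Probability.Probability"
begin

text \<open>Lenders are indexed by 0..<m, borrowers by 0..<n.
  A strategy profile is a function s :: nat => nat => real, where s i j is the
  amount lender i lends to borrower j; entries outside the index box are 0.\<close>

definition lending_game :: "nat \<Rightarrow> nat \<Rightarrow> (nat \<Rightarrow> real) \<Rightarrow> (nat \<Rightarrow> real) \<Rightarrow> real \<Rightarrow> real \<Rightarrow> bool" where
  "lending_game m n c d rmax rmin \<longleftrightarrow>
     0 < m \<and> 0 < n \<and> (\<forall>i<m. 0 < c i) \<and> (\<forall>j<n. 0 < d j) \<and> 0 < rmin \<and> rmin < rmax"

definition strat_set :: "nat \<Rightarrow> (nat \<Rightarrow> real) \<Rightarrow> nat \<Rightarrow> (nat \<Rightarrow> real) set" where
  "strat_set n c i = {z. (\<forall>j. n \<le> j \<longrightarrow> z j = 0) \<and> (\<forall>j<n. 0 \<le> z j) \<and> (\<Sum>j<n. z j) \<le> c i}"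

definition profiles :: "nat \<Rightarrow> nat \<Rightarrow> (nat \<Rightarrow> real) \<Rightarrow> (nat \<Rightarrow> nat \<Rightarrow> real) set" where
  "profiles m n c = {s. (\<forall>i. m \<le> i \<longrightarrow> s i = (\<lambda>_. 0)) \<and> (\<forall>i<m. s i \<in> strat_set n c i)}"

definition rate :: "nat \<Rightarrow> (nat \<Rightarrow> real) \<Rightarrow> real \<Rightarrow> real \<Rightarrow> (nat \<Rightarrow> nat \<Rightarrow> real) \<Rightarrow> nat \<Rightarrow> real" where
  "rate m d rmax rmin s j = (rmin - rmax) * (\<Sum>i<m. s i j) / d j + rmax"

definition utility :: "nat \<Rightarrow> nat \<Rightarrow> (nat \<Rightarrow> real) \<Rightarrow> real \<Rightarrow> real \<Rightarrow> nat \<Rightarrow> (nat \<Rightarrow> nat \<Rightarrow> real) \<Rightarrow> real" where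
  "utility m n d rmax rmin i s = (\<Sum>j<n. (rate m d rmax rmin s j - rmin) * s i j)"

definition is_pure_NE :: "nat \<Rightarrow> nat \<Rightarrow> (nat \<Rightarrow> real) \<Rightarrow> (nat \<Rightarrow> real) \<Rightarrow> real \<Rightarrow> real \<Rightarrow> (nat \<Rightarrow> nat \<Rightarrow> real) \<Rightarrow> bool" where
  "is_pure_NE m n c d rmax rmin s \<longleftrightarrow>
     s \<in> profiles m n c \<and>
     (\<forall>i<m. \<forall>z\<in>strat_set n c i. utility m n d rmax rmin i (s(i := z)) \<le> utility m n d rmax rmin i s)"

definition best_responses :: "nat \<Rightarrow> nat \<Rightarrow> (nat \<Rightarrow> real) \<Rightarrow> (nat \<Rightarrow> real) \<Rightarrow> real \<Rightarrow> real \<Rightarrow> nat \<Rightarrow> (nat \<Rightarrow> nat \<Rightarrow> real) \<Rightarrow> (nat \<Rightarrow> real) set" where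
  "best_responses m n c d rmax rmin i s =
     {z \<in> strat_set n c i. \<forall>z'\<in>strat_set n c i.
        utility m n d rmax rmin i (s(i := z')) \<le> utility m n d rmax rmin i (s(i := z))}"

text \<open>alpha-uniform best-response dynamics driven by a sequence of updating lenders
  \<omega> t (the lender updating at step t) and a best-response selection rule sel:
  sel t s i is the chosen element of BR_i(s) at time t. Time starts at 0
  (s^0 here corresponds to s^1 in the paper).\<close>
fun br_dynamics :: "real \<Rightarrow> (nat \<Rightarrow> (nat \<Rightarrow> nat \<Rightarrow> real) \<Rightarrow> nat \<Rightarrow> nat \<Rightarrow> real)
    \<Rightarrow> (nat \<Rightarrow> nat \<Rightarrow> real) \<Rightarrow> (nat \<Rightarrow> nat) \<Rightarrow> nat \<Rightarrow> nat \<Rightarrow> nat \<Rightarrow> real" where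
  "br_dynamics \<alpha> sel s1 \<omega> 0 = s1"
| "br_dynamics \<alpha> sel s1 \<omega> (Suc t) =
     (let s = br_dynamics \<alpha> sel s1 \<omega> t; i = \<omega> t
      in s(i := (\<lambda>j. s i j + \<alpha> * (sel t s i j - s i j))))"

end

theory Submission
  imports Defs
begin

(* Scaled by rmax - rmin, the concave quadratic
     Phi(s) = sum_j (S_j - (S_j^2 + sum_i s_ij^2) / (2 d_j)),   S_j = sum_i s_ij,
   changes under every unilateral deviation exactly as the utility of the deviating lender.
   Hence the equilibrium maximises Phi, and an alpha-step towards a best response raises Phi
   by at least alpha times the squared weighted length of the step: Phi increases along the
   dynamics and is bounded by its equilibrium value, so its gains tend to 0.
   Almost surely the lenders 0, ..., m-1 update in this order in infinitely many windows.
   At the start of such a window, the first-order conditions of the best responses computed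
   during the window bound the optimality gap by a multiple of the total step length in the
   window, whose square is at most a multiple of the gain of Phi in the window. So the gap
   tends to 0, and strong concavity of Phi turns this into convergence of the profiles. *)

lemma strat_set_segment:
  assumes "z \<in> strat_set n c i" "w \<in> strat_set n c i" "0 \<le> a" "a \<le> 1"
  shows "(\<lambda>j. w j + a * (z j - w j)) \<in> strat_set n c i"
proof -
  have "0 \<le> w j + a * (z j - w j)" if "j < n" for j
  proof -
    have "0 \<le> (1 - a) * w j + a * z j"
      using assms that by (intro add_nonneg_nonneg mult_nonneg_nonneg) (auto simp: strat_set_def)
    then show ?thesis by (simp add: algebra_simps)
  qed
  moreover have "(\<Sum>j<n. w j + a * (z j - w j)) = (1 - a) * (\<Sum>j<n. w j) + a * (\<Sum>j<n. z j)"
    by (simp add: sum.distrib sum_distrib_left algebra_simps sum_subtractf)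
  moreover have "\<dots> \<le> (1 - a) * c i + a * c i"
    using assms by (intro add_mono mult_left_mono) (auto simp: strat_set_def)
  ultimately show ?thesis
    using assms by (auto simp: strat_set_def algebra_simps)
qed

lemma profiles_update:
  "x \<in> profiles m n c \<Longrightarrow> i < m \<Longrightarrow> z \<in> strat_set n c i \<Longrightarrow> x(i := z) \<in> profiles m n c"
  by (auto simp: profiles_def)

lemma profiles_entry_bounds:
  assumes "x \<in> profiles m n c" "i < m" "j < n"
  shows "0 \<le> x i j" "x i j \<le> c i"
proof -
  have xi: "x i \<in> strat_set n c i"
    using assms by (simp add: profiles_def)
  then show "0 \<le> x i j"
    using assms by (simp add: strat_set_def)
  have "x i j \<le> (\<Sum>j<n. x i j)"
    using xi assms by (intro member_le_sum) (auto simp: strat_set_def)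
  also have "\<dots> \<le> c i"
    using xi by (simp add: strat_set_def)
  finally show "x i j \<le> c i" .
qed

locale interbank_game =
  fixes m n :: nat and c d :: "nat \<Rightarrow> real" and rmax rmin :: real
  assumes game: "lending_game m n c d rmax rmin"
begin

lemma demand_pos: "j < n \<Longrightarrow> 0 < d j"
  and budget_pos: "i < m \<Longrightarrow> 0 < c i"
  and rmin_less_rmax: "rmin < rmax"
  using game by (auto simp: lending_game_def)

lemma demand_nonzero: "j < n \<Longrightarrow> d j \<noteq> 0"
  using demand_pos by force

definition borrowed :: "(nat \<Rightarrow> nat \<Rightarrow> real) \<Rightarrow> nat \<Rightarrow> real" where
  "borrowed x j = (\<Sum>i<m. x i j)"

definition potential :: "(nat \<Rightarrow> nat \<Rightarrow> real) \<Rightarrow> real" where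
  "potential x = (\<Sum>j<n. borrowed x j - ((borrowed x j)\<^sup>2 + (\<Sum>i<m. (x i j)\<^sup>2)) / (2 * d j))"

definition potential_grad :: "(nat \<Rightarrow> nat \<Rightarrow> real) \<Rightarrow> nat \<Rightarrow> nat \<Rightarrow> real" where
  "potential_grad x i j = 1 - (borrowed x j + x i j) / d j"

definition quad :: "(nat \<Rightarrow> nat \<Rightarrow> real) \<Rightarrow> real" where
  "quad h = (\<Sum>j<n. ((borrowed h j)\<^sup>2 + (\<Sum>i<m. (h i j)\<^sup>2)) / (2 * d j))"

lemma quad_nonneg: "0 \<le> quad h"
  unfolding quad_def using demand_pos
  by (intro sum_nonneg divide_nonneg_pos add_nonneg_nonneg sum_nonneg) auto

lemma quad_ge_entry:
  assumes "i < m" "j < n"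
  shows "(h i j)\<^sup>2 / (2 * d j) \<le> quad h"
proof -
  have "(h i j)\<^sup>2 \<le> (\<Sum>i<m. (h i j)\<^sup>2)"
    using assms by (intro member_le_sum) auto
  then have "(h i j)\<^sup>2 / (2 * d j) \<le> ((borrowed h j)\<^sup>2 + (\<Sum>i<m. (h i j)\<^sup>2)) / (2 * d j)"
    using assms demand_pos[of j] by (intro divide_right_mono add_increasing) auto
  also have "\<dots> \<le> quad h"
    unfolding quad_def using assms demand_pos
    by (intro member_le_sum[where f = "\<lambda>j. ((borrowed h j)\<^sup>2 + (\<Sum>i<m. (h i j)\<^sup>2)) / (2 * d j)"]
        divide_nonneg_pos add_nonneg_nonneg sum_nonneg) auto
  finally show ?thesis .
qed

lemma potential_along_line:
  "potential (\<lambda>i j. x i j + a * h i j)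
     = potential x + a * (\<Sum>i<m. \<Sum>j<n. potential_grad x i j * h i j) - a\<^sup>2 * quad h"
proof -
  have borrowed_line: "borrowed (\<lambda>i j. x i j + a * h i j) j = borrowed x j + a * borrowed h j" for j
    by (simp add: borrowed_def sum.distrib sum_distrib_left)
  have squares_line: "(\<Sum>i<m. (x i j + a * h i j)\<^sup>2)
      = (\<Sum>i<m. (x i j)\<^sup>2) + 2 * a * (\<Sum>i<m. x i j * h i j) + a\<^sup>2 * (\<Sum>i<m. (h i j)\<^sup>2)" for j
    by (simp add: power2_eq_square algebra_simps sum.distrib sum_distrib_left)
  have grad_column: "(\<Sum>i<m. potential_grad x i j * h i j)
      = borrowed h j - (borrowed x j * borrowed h j + (\<Sum>i<m. x i j * h i j)) / d j" for j
  proof -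
    have "(\<Sum>i<m. potential_grad x i j * h i j)
        = (\<Sum>i<m. h i j - (borrowed x j * h i j + x i j * h i j) / d j)"
      by (simp add: potential_grad_def left_diff_distrib distrib_right)
    then show ?thesis
      by (simp add: borrowed_def sum_subtractf sum.distrib sum_distrib_left
          sum_divide_distrib[symmetric])
  qed
  have "potential (\<lambda>i j. x i j + a * h i j) = (\<Sum>j<n.
      (borrowed x j - ((borrowed x j)\<^sup>2 + (\<Sum>i<m. (x i j)\<^sup>2)) / (2 * d j))
      + a * (borrowed h j - (borrowed x j * borrowed h j + (\<Sum>i<m. x i j * h i j)) / d j)
      - a\<^sup>2 * (((borrowed h j)\<^sup>2 + (\<Sum>i<m. (h i j)\<^sup>2)) / (2 * d j)))"
    unfolding potential_def borrowed_line squares_line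
    by (rule sum.cong[OF refl]) (simp add: demand_nonzero field_simps power2_eq_square)
  also have "\<dots> = potential x + a * (\<Sum>i<m. \<Sum>j<n. potential_grad x i j * h i j) - a\<^sup>2 * quad h"
    unfolding potential_def quad_def sum.swap[of _ "{..<n}"] grad_column
    by (simp add: sum.distrib sum_subtractf sum_distrib_left right_diff_distrib)
  finally show ?thesis .
qed

lemma borrowed_update: "i < m \<Longrightarrow> borrowed (y(i := z)) j = borrowed y j - y i j + z j"
proof -
  assume i: "i < m"
  have "borrowed (y(i := z)) j = (\<Sum>k<m. y k j + (if k = i then z j - y i j else 0))"
    unfolding borrowed_def by (rule sum.cong) auto
  then show ?thesis
    using i by (simp add: sum.distrib borrowed_def)
qed

lemma potential_grad_update:
  "i < m \<Longrightarrow> potential_grad (y(i := z)) i j = potential_grad y i j - 2 * (z j - y i j) / d j"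
  by (simp add: potential_grad_def borrowed_update diff_divide_distrib add_divide_distrib)

lemma potential_update:
  assumes i: "i < m"
  shows "potential (y(i := \<lambda>j. y i j + a * f j))
     = potential y + a * (\<Sum>j<n. potential_grad y i j * f j) - a\<^sup>2 * (\<Sum>j<n. (f j)\<^sup>2 / d j)"
proof -
  define h where "h k j = (if k = i then f j else 0)" for k j
  have "y(i := \<lambda>j. y i j + a * f j) = (\<lambda>k j. y k j + a * h k j)"
    by (auto simp: h_def)
  moreover have "(\<Sum>k<m. \<Sum>j<n. potential_grad y k j * h k j)
      = (\<Sum>k<m. if k = i then (\<Sum>j<n. potential_grad y i j * f j) else 0)"
    by (rule sum.cong) (auto simp: h_def)
  moreover have "borrowed h j = f j" and "(\<Sum>k<m. (h k j)\<^sup>2) = (f j)\<^sup>2" for j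
  proof -
    have "(\<Sum>k<m. h k j) = (\<Sum>k<m. if k = i then f j else 0)"
      by (rule sum.cong) (auto simp: h_def)
    moreover have "(\<Sum>k<m. (h k j)\<^sup>2) = (\<Sum>k<m. if k = i then (f j)\<^sup>2 else 0)"
      by (rule sum.cong) (auto simp: h_def)
    ultimately show "borrowed h j = f j" and "(\<Sum>k<m. (h k j)\<^sup>2) = (f j)\<^sup>2"
      using i by (simp_all add: borrowed_def)
  qed
  then have "quad h = (\<Sum>j<n. (f j)\<^sup>2 / d j)"
    by (simp add: quad_def)
  ultimately show ?thesis
    using i by (simp add: potential_along_line)
qed

lemma utility_update_eq_potential_update:
  assumes i: "i < m"
  shows "utility m n d rmax rmin i (y(i := z)) - utility m n d rmax rmin i y
     = (rmax - rmin) * (potential (y(i := z)) - potential y)"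
proof -
  have rate_eq: "rate m d rmax rmin s j = (rmin - rmax) * borrowed s j / d j + rmax" for s j
    by (simp add: rate_def borrowed_def)
  have "utility m n d rmax rmin i (y(i := z)) - utility m n d rmax rmin i y
      = (\<Sum>j<n. ((rmin - rmax) * (borrowed y j - y i j + z j) / d j + rmax - rmin) * z j
          - ((rmin - rmax) * borrowed y j / d j + rmax - rmin) * y i j)"
    by (simp add: utility_def rate_eq borrowed_update[OF i] sum_subtractf)
  also have "\<dots> = (rmax - rmin)
      * (\<Sum>j<n. potential_grad y i j * (z j - y i j) - (z j - y i j)\<^sup>2 / d j)"
    unfolding sum_distrib_left
    by (rule sum.cong[OF refl])
      (simp add: demand_nonzero potential_grad_def field_simps power2_eq_square)
  also have "\<dots> = (rmax - rmin) * (potential (y(i := z)) - potential y)"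
    using potential_update[OF i, of y 1 "\<lambda>j. z j - y i j"] by (simp add: sum_subtractf)
  finally show ?thesis .
qed

lemma row_maximizer_variational_ineq:
  assumes i: "i < m" and yi: "y i \<in> strat_set n c i"
    and max: "\<And>z. z \<in> strat_set n c i \<Longrightarrow> potential (y(i := z)) \<le> potential y"
    and z: "z \<in> strat_set n c i"
  shows "(\<Sum>j<n. potential_grad y i j * (z j - y i j)) \<le> 0"
proof (rule field_le_epsilon)
  define G where "G = (\<Sum>j<n. potential_grad y i j * (z j - y i j))"
  define Q where "Q = (\<Sum>j<n. (z j - y i j)\<^sup>2 / d j)"
  have Q: "0 \<le> Q"
    unfolding Q_def using demand_pos by (intro sum_nonneg divide_nonneg_pos) auto
  have G_le: "G \<le> a * Q" if a: "0 < a" "a \<le> 1" for a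
  proof -
    have "potential (y(i := \<lambda>j. y i j + a * (z j - y i j))) \<le> potential y"
      using max strat_set_segment[OF z yi] a by simp
    then have "a * G \<le> a * (a * Q)"
      using potential_update[OF i, of y a "\<lambda>j. z j - y i j"]
      by (simp add: G_def Q_def power2_eq_square)
    then show ?thesis
      using a by simp
  qed
  fix e :: real assume e: "0 < e"
  define a where "a = min 1 (e / (Q + 1))"
  have a: "0 < a" "a \<le> 1"
    using e Q by (auto simp: a_def)
  have "a * Q \<le> e / (Q + 1) * Q"
    using Q by (intro mult_right_mono) (auto simp: a_def)
  also have "\<dots> \<le> e"
    using e Q by (simp add: field_simps)
  finally show "G \<le> 0 + e"
    using G_le[OF a] by (simp add: G_def)
qed

lemma best_response_variational_ineq:
  assumes i: "i < m" and w: "w \<in> best_responses m n c d rmax rmin i x"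
    and z: "z \<in> strat_set n c i"
  shows "(\<Sum>j<n. potential_grad (x(i := w)) i j * (z j - w j)) \<le> 0"
proof -
  have "potential (x(i := z')) \<le> potential (x(i := w))" if "z' \<in> strat_set n c i" for z'
  proof -
    have "utility m n d rmax rmin i (x(i := z')) \<le> utility m n d rmax rmin i (x(i := w))"
      using w that by (simp add: best_responses_def)
    then show ?thesis
      using utility_update_eq_potential_update[OF i, of x] rmin_less_rmax
      by (smt (verit) mult_le_cancel_left)
  qed
  then show ?thesis
    using row_maximizer_variational_ineq[OF i, of "x(i := w)"] w z
    by (simp add: best_responses_def)
qed

lemma NE_variational_ineq:
  assumes NE: "is_pure_NE m n c d rmax rmin s" and i: "i < m" and z: "z \<in> strat_set n c i"
  shows "(\<Sum>j<n. potential_grad s i j * (z j - s i j)) \<le> 0"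
proof -
  have "potential (s(i := z')) \<le> potential s" if "z' \<in> strat_set n c i" for z'
  proof -
    have "utility m n d rmax rmin i (s(i := z')) \<le> utility m n d rmax rmin i s"
      using NE that i by (simp add: is_pure_NE_def)
    then show ?thesis
      using utility_update_eq_potential_update[OF i, of s z'] rmin_less_rmax
      by (smt (verit) mult_le_0_iff)
  qed
  moreover have "s i \<in> strat_set n c i"
    using NE i by (simp add: is_pure_NE_def profiles_def)
  ultimately show ?thesis
    using row_maximizer_variational_ineq[OF i] z by blast
qed

lemma best_response_step_increase:
  assumes i: "i < m" and xi: "x i \<in> strat_set n c i"
    and w: "w \<in> best_responses m n c d rmax rmin i x" and a: "0 \<le> a" "a \<le> 1"
  shows "potential x + a * (\<Sum>j<n. (w j - x i j)\<^sup>2 / d j)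
    \<le> potential (x(i := \<lambda>j. x i j + a * (w j - x i j)))"
proof -
  define G where "G = (\<Sum>j<n. potential_grad x i j * (w j - x i j))"
  define Q where "Q = (\<Sum>j<n. (w j - x i j)\<^sup>2 / d j)"
  have "(\<Sum>j<n. potential_grad (x(i := w)) i j * (x i j - w j)) \<le> 0"
    using best_response_variational_ineq[OF i w xi] .
  moreover have "(\<Sum>j<n. potential_grad (x(i := w)) i j * (x i j - w j))
      = (\<Sum>j<n. 2 * ((w j - x i j)\<^sup>2 / d j) - potential_grad x i j * (w j - x i j))"
    by (rule sum.cong[OF refl])
      (simp add: demand_nonzero potential_grad_update[OF i] field_simps power2_eq_square)
  then have "(\<Sum>j<n. potential_grad (x(i := w)) i j * (x i j - w j)) = 2 * Q - G"
    by (simp add: G_def Q_def sum_subtractf sum_distrib_left)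
  ultimately have "2 * Q \<le> G"
    by simp
  moreover have "0 \<le> Q"
    unfolding Q_def using demand_pos by (intro sum_nonneg divide_nonneg_pos) auto
  ultimately have "a * (2 * Q) \<le> a * G" and "a\<^sup>2 * Q \<le> a * Q"
    using a by (auto intro: mult_left_mono mult_right_mono
        simp: power2_eq_square mult_left_le_one_le)
  then have "a * Q \<le> a * G - a\<^sup>2 * Q"
    by simp
  then show ?thesis
    using potential_update[OF i, of x a "\<lambda>j. w j - x i j"] by (simp add: G_def Q_def)
qed

lemma potential_le_NE:
  assumes NE: "is_pure_NE m n c d rmax rmin s" and x: "x \<in> profiles m n c"
  shows "potential x + quad (\<lambda>i j. x i j - s i j) \<le> potential s"
proof -
  have "(\<Sum>i<m. \<Sum>j<n. potential_grad s i j * (x i j - s i j)) \<le> 0"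
  proof (rule sum_nonpos)
    fix i assume "i \<in> {..<m}"
    then show "(\<Sum>j<n. potential_grad s i j * (x i j - s i j)) \<le> 0"
      using NE_variational_ineq[OF NE, of i "x i"] x by (simp add: profiles_def)
  qed
  then show ?thesis
    using potential_along_line[of s 1 "\<lambda>i j. x i j - s i j"] by simp
qed

definition l1_dist :: "(nat \<Rightarrow> nat \<Rightarrow> real) \<Rightarrow> (nat \<Rightarrow> nat \<Rightarrow> real) \<Rightarrow> real" where
  "l1_dist x y = (\<Sum>i<m. \<Sum>j<n. \<bar>x i j - y i j\<bar>)"

definition total_budget :: real where
  "total_budget = (\<Sum>i<m. c i)"

definition total_demand :: real where
  "total_demand = (\<Sum>j<n. d j)"

definition inverse_demand_sum :: real where
  "inverse_demand_sum = (\<Sum>j<n. 1 / d j)"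

definition perturb_const :: real where
  "perturb_const = 1 + 4 * total_budget * inverse_demand_sum"

lemma budget_le_total_budget: "i < m \<Longrightarrow> c i \<le> total_budget"
  unfolding total_budget_def using budget_pos by (intro member_le_sum) (auto intro: less_imp_le)

lemma inverse_demand_le_sum: "j < n \<Longrightarrow> 1 / d j \<le> inverse_demand_sum"
  unfolding inverse_demand_sum_def using demand_pos
  by (intro member_le_sum) (auto intro: less_imp_le)

lemma inverse_demand_sum_nonneg: "0 \<le> inverse_demand_sum"
  unfolding inverse_demand_sum_def using demand_pos by (intro sum_nonneg) (auto intro: less_imp_le)

lemma total_demand_nonneg: "0 \<le> total_demand"
  unfolding total_demand_def using demand_pos by (intro sum_nonneg) (auto intro: less_imp_le)

lemma total_budget_nonneg: "0 \<le> total_budget"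
  unfolding total_budget_def using budget_pos by (intro sum_nonneg) (auto intro: less_imp_le)

lemma perturb_const_nonneg: "0 \<le> perturb_const"
  unfolding perturb_const_def using total_budget_nonneg inverse_demand_sum_nonneg by simp

lemma borrowed_bounds:
  assumes "x \<in> profiles m n c" "j < n"
  shows "0 \<le> borrowed x j" "borrowed x j \<le> total_budget"
  unfolding borrowed_def total_budget_def using profiles_entry_bounds[OF assms(1) _ assms(2)]
  by (auto intro!: sum_nonneg sum_mono)

lemma abs_potential_grad_le:
  assumes x: "x \<in> profiles m n c" and i: "i < m" and j: "j < n"
  shows "\<bar>potential_grad x i j\<bar> \<le> 1 + 2 * total_budget * inverse_demand_sum"
proof -
  have B: "0 \<le> borrowed x j + x i j" "borrowed x j + x i j \<le> 2 * total_budget"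
    using borrowed_bounds[OF x j] profiles_entry_bounds[OF x i j] budget_le_total_budget[OF i]
    by linarith+
  have "\<bar>(borrowed x j + x i j) / d j\<bar> = (borrowed x j + x i j) * (1 / d j)"
    using B demand_pos[OF j] by simp
  also have "\<dots> \<le> 2 * total_budget * inverse_demand_sum"
    using B inverse_demand_le_sum[OF j] demand_pos[OF j] by (intro mult_mono) auto
  finally show ?thesis
    unfolding potential_grad_def by linarith
qed

lemma abs_potential_grad_diff_le:
  assumes i: "i < m" and j: "j < n"
  shows "\<bar>potential_grad x i j - potential_grad v i j\<bar>
    \<le> 2 * inverse_demand_sum * (\<Sum>k<m. \<bar>x k j - v k j\<bar>)"
proof -
  define E where "E = (\<Sum>k<m. \<bar>x k j - v k j\<bar>)"
  have "\<bar>borrowed x j - borrowed v j\<bar> \<le> E"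
    unfolding E_def borrowed_def sum_subtractf[symmetric] by (rule sum_abs)
  moreover have "\<bar>x i j - v i j\<bar> \<le> E"
    unfolding E_def using i by (intro member_le_sum) auto
  ultimately have bound: "\<bar>borrowed x j - borrowed v j + (x i j - v i j)\<bar> * (1 / d j)
      \<le> (2 * E) * inverse_demand_sum"
    using inverse_demand_le_sum[OF j] demand_pos[OF j]
    by (intro mult_mono) (auto intro: order_trans[OF abs_triangle_ineq])
  have "potential_grad x i j - potential_grad v i j
      = - ((borrowed x j - borrowed v j + (x i j - v i j)) * (1 / d j))"
    using demand_pos[OF j] by (simp add: potential_grad_def field_simps)
  then have "\<bar>potential_grad x i j - potential_grad v i j\<bar>
      = \<bar>borrowed x j - borrowed v j + (x i j - v i j)\<bar> * (1 / d j)"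
    using demand_pos[OF j] by (simp add: abs_mult)
  also have "\<dots> \<le> (2 * E) * inverse_demand_sum"
    by (rule bound)
  finally show ?thesis
    by (simp add: E_def mult_ac)
qed

lemma row_term_perturb:
  assumes x: "x \<in> profiles m n c" and v: "v \<in> profiles m n c" and s: "s \<in> profiles m n c"
    and i: "i < m" and j: "j < n"
  shows "potential_grad x i j * (s i j - x i j) - potential_grad v i j * (s i j - v i j)
    \<le> perturb_const * (\<Sum>k<m. \<bar>x k j - v k j\<bar>)"
proof -
  define E where "E = (\<Sum>k<m. \<bar>x k j - v k j\<bar>)"
  have "\<bar>x i j - v i j\<bar> \<le> E"
    unfolding E_def using i by (intro member_le_sum) auto
  moreover have "\<bar>s i j - v i j\<bar> \<le> total_budget"
    using profiles_entry_bounds[OF s i j] profiles_entry_bounds[OF v i j]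
      budget_le_total_budget[OF i] by linarith
  moreover have "0 \<le> E"
    unfolding E_def by (intro sum_nonneg) auto
  ultimately have bound: "\<bar>potential_grad x i j - potential_grad v i j\<bar> * \<bar>s i j - v i j\<bar>
      + \<bar>potential_grad x i j\<bar> * \<bar>x i j - v i j\<bar>
      \<le> (2 * inverse_demand_sum * E) * total_budget
        + (1 + 2 * total_budget * inverse_demand_sum) * E"
    using abs_potential_grad_diff_le[OF i j, of x v] abs_potential_grad_le[OF x i j]
    unfolding E_def by (intro add_mono mult_mono) auto
  have "potential_grad x i j * (s i j - x i j) - potential_grad v i j * (s i j - v i j)
      = (potential_grad x i j - potential_grad v i j) * (s i j - v i j)
        + potential_grad x i j * (v i j - x i j)"
    by (simp add: algebra_simps)
  also have "\<dots> \<le> \<bar>(potential_grad x i j - potential_grad v i j) * (s i j - v i j)\<bar>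
      + \<bar>potential_grad x i j * (v i j - x i j)\<bar>"
    by (intro add_mono abs_ge_self)
  also have "\<dots> = \<bar>potential_grad x i j - potential_grad v i j\<bar> * \<bar>s i j - v i j\<bar>
      + \<bar>potential_grad x i j\<bar> * \<bar>x i j - v i j\<bar>"
    by (simp add: abs_mult abs_minus_commute)
  also have "\<dots> \<le> perturb_const * E"
    using bound by (simp add: perturb_const_def algebra_simps)
  finally show ?thesis
    unfolding E_def .
qed

lemma row_variational_ineq_perturb:
  assumes i: "i < m" and x: "x \<in> profiles m n c" and v: "v \<in> profiles m n c"
    and s: "s \<in> profiles m n c"
    and vi: "(\<Sum>j<n. potential_grad v i j * (s i j - v i j)) \<le> 0"
  shows "(\<Sum>j<n. potential_grad x i j * (s i j - x i j)) \<le> perturb_const * l1_dist x v"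
proof -
  have "(\<Sum>j<n. potential_grad x i j * (s i j - x i j))
      - (\<Sum>j<n. potential_grad v i j * (s i j - v i j))
      \<le> (\<Sum>j<n. perturb_const * (\<Sum>k<m. \<bar>x k j - v k j\<bar>))"
    unfolding sum_subtractf[symmetric] using row_term_perturb[OF x v s i] by (intro sum_mono) auto
  also have "\<dots> = perturb_const * l1_dist x v"
    unfolding l1_dist_def sum_distrib_left[symmetric] by (subst sum.swap) simp
  finally show ?thesis
    using vi by simp
qed

lemma l1_dist_update_le:
  assumes "i < m"
  shows "l1_dist x (y(i := z)) \<le> l1_dist x y + (\<Sum>j<n. \<bar>z j - y i j\<bar>)"
proof -
  have "l1_dist x (y(i := z))
      \<le> (\<Sum>k<m. (\<Sum>j<n. \<bar>x k j - y k j\<bar>) + (if k = i then \<Sum>j<n. \<bar>z j - y i j\<bar> else 0))"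
    unfolding l1_dist_def
  proof (rule sum_mono)
    fix k
    show "(\<Sum>j<n. \<bar>x k j - (y(i := z)) k j\<bar>)
        \<le> (\<Sum>j<n. \<bar>x k j - y k j\<bar>) + (if k = i then \<Sum>j<n. \<bar>z j - y i j\<bar> else 0)"
    proof (cases "k = i")
      case True
      have "(\<Sum>j<n. \<bar>x i j - z j\<bar>) \<le> (\<Sum>j<n. \<bar>x i j - y i j\<bar> + \<bar>z j - y i j\<bar>)"
        by (intro sum_mono) arith
      then show ?thesis
        using True by (simp add: sum.distrib)
    qed simp
  qed
  also have "\<dots> = l1_dist x y + (\<Sum>j<n. \<bar>z j - y i j\<bar>)"
    using assms by (simp add: l1_dist_def sum.distrib)
  finally show ?thesis .
qed

lemma sum_abs_sq_le_total_demand: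
  "(\<Sum>j<n. \<bar>f j\<bar>)\<^sup>2 \<le> total_demand * (\<Sum>j<n. (f j)\<^sup>2 / d j)"
proof -
  have sqrt_d: "sqrt (d j) * (\<bar>f j\<bar> / sqrt (d j)) = \<bar>f j\<bar>"
    "(sqrt (d j))\<^sup>2 = d j" "(\<bar>f j\<bar> / sqrt (d j))\<^sup>2 = (f j)\<^sup>2 / d j"
    if "j \<in> {..<n}" for j
    using demand_pos[of j] that by (auto simp: power_divide)
  have "(\<Sum>j<n. \<bar>f j\<bar>) = (\<Sum>j<n. sqrt (d j) * (\<bar>f j\<bar> / sqrt (d j)))"
    by (rule sum.cong[OF refl]) (metis sqrt_d(1))
  moreover have "(\<Sum>j<n. (sqrt (d j))\<^sup>2) = total_demand"
    unfolding total_demand_def by (rule sum.cong[OF refl]) (metis sqrt_d(2))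
  moreover have "(\<Sum>j<n. (\<bar>f j\<bar> / sqrt (d j))\<^sup>2) = (\<Sum>j<n. (f j)\<^sup>2 / d j)"
    by (rule sum.cong[OF refl]) (metis sqrt_d(3))
  ultimately show ?thesis
    using Cauchy_Schwarz_ineq_sum[of "\<lambda>j. sqrt (d j)" "\<lambda>j. \<bar>f j\<bar> / sqrt (d j)" "{..<n}"]
    by simp
qed

end

locale br_trajectory = interbank_game +
  fixes \<alpha> :: real
    and sel :: "nat \<Rightarrow> (nat \<Rightarrow> nat \<Rightarrow> real) \<Rightarrow> nat \<Rightarrow> nat \<Rightarrow> real"
    and s1 sstar :: "nat \<Rightarrow> nat \<Rightarrow> real" and \<omega> :: "nat \<Rightarrow> nat"
  assumes step_size: "0 < \<alpha>" "\<alpha> \<le> 1"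
    and initial: "s1 \<in> profiles m n c"
    and sel: "\<And>t s i. s \<in> profiles m n c \<Longrightarrow> i < m \<Longrightarrow>
                sel t s i \<in> best_responses m n c d rmax rmin i s"
    and NE: "is_pure_NE m n c d rmax rmin sstar"
    and updater: "\<And>t. \<omega> t < m"
begin

abbreviation X :: "nat \<Rightarrow> nat \<Rightarrow> nat \<Rightarrow> real" where
  "X t \<equiv> br_dynamics \<alpha> sel s1 \<omega> t"

abbreviation target :: "nat \<Rightarrow> nat \<Rightarrow> real" where
  "target t \<equiv> sel t (X t) (\<omega> t)"

definition jump :: "nat \<Rightarrow> real" where
  "jump t = (\<Sum>j<n. \<bar>target t j - X t (\<omega> t) j\<bar>)"

lemma X_Suc: "X (Suc t) = (X t)(\<omega> t := \<lambda>j. X t (\<omega> t) j + \<alpha> * (target t j - X t (\<omega> t) j))"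
  by (simp add: Let_def)

lemma X_in_profiles: "X t \<in> profiles m n c"
proof (induction t)
  case 0
  then show ?case using initial by simp
next
  case (Suc t)
  have "target t \<in> strat_set n c (\<omega> t)"
    using sel[OF Suc updater] by (simp add: best_responses_def)
  moreover have "X t (\<omega> t) \<in> strat_set n c (\<omega> t)"
    using Suc updater by (simp add: profiles_def)
  ultimately show ?case
    unfolding X_Suc using Suc updater step_size
    by (intro profiles_update strat_set_segment) auto
qed

lemma potential_X_Suc_ge:
  "potential (X t) + \<alpha> * (\<Sum>j<n. (target t j - X t (\<omega> t) j)\<^sup>2 / d j) \<le> potential (X (Suc t))"
  unfolding X_Suc using X_in_profiles updater step_size
  by (intro best_response_step_increase sel) (auto simp: profiles_def)

lemma incseq_potential_X: "incseq (\<lambda>t. potential (X t))"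
proof (rule incseq_SucI)
  fix t
  have "0 \<le> \<alpha> * (\<Sum>j<n. (target t j - X t (\<omega> t) j)\<^sup>2 / d j)"
    using step_size demand_pos by (intro mult_nonneg_nonneg sum_nonneg divide_nonneg_pos) auto
  then show "potential (X t) \<le> potential (X (Suc t))"
    using potential_X_Suc_ge[of t] by linarith
qed

lemma potential_X_le: "potential (X t) \<le> potential sstar"
  using potential_le_NE[OF NE X_in_profiles, of t] quad_nonneg[of "\<lambda>i j. X t i j - sstar i j"]
  by linarith

lemma jump_sq_le: "\<alpha> * (jump t)\<^sup>2 \<le> total_demand * (potential (X (Suc t)) - potential (X t))"
proof -
  have "\<alpha> * (jump t)\<^sup>2
      \<le> \<alpha> * (total_demand * (\<Sum>j<n. (target t j - X t (\<omega> t) j)\<^sup>2 / d j))"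
    unfolding jump_def using step_size by (intro mult_left_mono sum_abs_sq_le_total_demand) auto
  also have "\<dots> \<le> total_demand * (potential (X (Suc t)) - potential (X t))"
  proof -
    have "\<alpha> * (\<Sum>j<n. (target t j - X t (\<omega> t) j)\<^sup>2 / d j)
        \<le> potential (X (Suc t)) - potential (X t)"
      using potential_X_Suc_ge[of t] by linarith
    then have "total_demand * (\<alpha> * (\<Sum>j<n. (target t j - X t (\<omega> t) j)\<^sup>2 / d j))
        \<le> total_demand * (potential (X (Suc t)) - potential (X t))"
      by (rule mult_left_mono[OF _ total_demand_nonneg])
    then show ?thesis
      by (simp only: mult.left_commute)
  qed
  finally show ?thesis .
qed

lemma l1_dist_X_le: "l1_dist (X t) (X (t + k)) \<le> (\<Sum>l<k. jump (t + l))"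
proof (induction k)
  case 0
  then show ?case by (simp add: l1_dist_def)
next
  case (Suc k)
  have "(\<Sum>j<n. \<bar>\<alpha> * (target (t + k) j - X (t + k) (\<omega> (t + k)) j)\<bar>) \<le> jump (t + k)"
    unfolding jump_def using step_size
    by (intro sum_mono) (simp add: abs_mult mult_left_le_one_le)
  moreover have "l1_dist (X t) (X (Suc (t + k)))
      \<le> l1_dist (X t) (X (t + k)) + (\<Sum>j<n. \<bar>\<alpha> * (target (t + k) j - X (t + k) (\<omega> (t + k)) j)\<bar>)"
    unfolding X_Suc by (rule order_trans[OF l1_dist_update_le[OF updater]]) simp
  ultimately show ?case
    using Suc by simp
qed

(* The best response computed at the step where lender i updates satisfies the first-order
   condition of lender i; between the window start and that step the profile moved by at most
   the jumps, so row i of the gradient inequality at the window start is violated by at most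
   a constant times these jumps. *)
lemma gap_le_window_jumps:
  assumes window: "\<And>i. i < m \<Longrightarrow> \<exists>l<L. \<omega> (t + l) = i"
  shows "potential sstar - potential (X t) \<le> m * perturb_const * (\<Sum>l<L. jump (t + l))"
proof -
  define S where "S = (\<Sum>l<L. jump (t + l))"
  have sstar: "sstar \<in> profiles m n c"
    using NE by (simp add: is_pure_NE_def)
  have row: "(\<Sum>j<n. potential_grad (X t) i j * (sstar i j - X t i j)) \<le> perturb_const * S"
    if i: "i < m" for i
  proof -
    obtain l where l: "l < L" "\<omega> (t + l) = i"
      using window[OF i] by blast
    define v where "v = (X (t + l))(i := target (t + l))"
    have br: "target (t + l) \<in> best_responses m n c d rmax rmin i (X (t + l))"
      using sel[OF X_in_profiles i] l by simp
    then have v: "v \<in> profiles m n c"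
      unfolding v_def using X_in_profiles i
      by (intro profiles_update) (auto simp: best_responses_def)
    have "(\<Sum>j<n. potential_grad v i j * (sstar i j - v i j)) \<le> 0"
      unfolding v_def using best_response_variational_ineq[OF i br] sstar i
      by (simp add: profiles_def)
    then have "(\<Sum>j<n. potential_grad (X t) i j * (sstar i j - X t i j))
        \<le> perturb_const * l1_dist (X t) v"
      by (rule row_variational_ineq_perturb[OF i X_in_profiles v sstar])
    also have "l1_dist (X t) v \<le> l1_dist (X t) (X (t + l)) + jump (t + l)"
      unfolding v_def jump_def using l1_dist_update_le[OF i] l(2) by simp
    also have "\<dots> \<le> (\<Sum>l'<Suc l. jump (t + l'))"
      using l1_dist_X_le[of t l] by simp
    also have "\<dots> \<le> S"
      unfolding S_def using l jump_def by (intro sum_mono2) auto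
    finally show ?thesis
      using perturb_const_nonneg by (simp add: mult_left_mono)
  qed
  have "potential sstar - potential (X t)
      \<le> (\<Sum>i<m. \<Sum>j<n. potential_grad (X t) i j * (sstar i j - X t i j))"
    using potential_along_line[of "X t" 1 "\<lambda>i j. sstar i j - X t i j"] quad_nonneg by simp
  also have "\<dots> \<le> (\<Sum>i<m. perturb_const * S)"
    using row by (intro sum_mono) auto
  finally show ?thesis
    by (simp add: S_def)
qed

lemma gap_sq_le_window_gain:
  assumes window: "\<And>i. i < m \<Longrightarrow> \<exists>l<L. \<omega> (t + l) = i"
  shows "\<alpha> * (potential sstar - potential (X t))\<^sup>2
    \<le> (m * perturb_const)\<^sup>2 * L * total_demand
      * (potential (X (t + L)) - potential (X t))"
proof -
  define A where "A = m * perturb_const"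
  define S where "S = (\<Sum>l<L. jump (t + l))"
  have "(potential sstar - potential (X t))\<^sup>2 \<le> (A * S)\<^sup>2"
    using gap_le_window_jumps[OF window] potential_X_le[of t]
    by (intro power_mono) (auto simp: A_def S_def)
  then have gap: "\<alpha> * (potential sstar - potential (X t))\<^sup>2 \<le> A\<^sup>2 * (\<alpha> * S\<^sup>2)"
    using step_size by (simp add: power_mult_distrib mult_ac)
  have "S\<^sup>2 \<le> L * (\<Sum>l<L. (jump (t + l))\<^sup>2)"
    using sum_squared_le_sum_of_squares[of "\<lambda>l. jump (t + l)" "{..<L}"]
    by (simp add: S_def mult_ac)
  then have "\<alpha> * S\<^sup>2 \<le> \<alpha> * (L * (\<Sum>l<L. (jump (t + l))\<^sup>2))"
    using step_size by (intro mult_left_mono) auto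
  then have "\<alpha> * S\<^sup>2 \<le> L * (\<Sum>l<L. \<alpha> * (jump (t + l))\<^sup>2)"
    by (simp add: sum_distrib_left mult_ac)
  also have "(\<Sum>l<L. \<alpha> * (jump (t + l))\<^sup>2)
      \<le> (\<Sum>l<L. total_demand * (potential (X (Suc (t + l))) - potential (X (t + l))))"
    by (intro sum_mono jump_sq_le)
  also have "\<dots> = total_demand * (potential (X (t + L)) - potential (X t))"
    using sum_lessThan_telescope[of "\<lambda>l. potential (X (t + l))" L]
    by (simp add: sum_distrib_left[symmetric])
  finally have "\<alpha> * S\<^sup>2 \<le> L * (total_demand * (potential (X (t + L)) - potential (X t)))"
    by (simp add: mult_left_mono)
  then show ?thesis
    using gap mult_left_mono[OF _ zero_le_power2[of A]] by (fastforce simp: A_def mult_ac)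
qed

lemma gap_tendsto_zero:
  assumes windows: "\<And>T. \<exists>t\<ge>T. \<forall>i<m. \<exists>l<L. \<omega> (t + l) = i"
  shows "(\<lambda>t. potential sstar - potential (X t)) \<longlonglongrightarrow> 0"
proof (rule order_tendstoI)
  fix a :: real assume "a < 0"
  then have "a < potential sstar - potential (X t)" for t
    using potential_X_le[of t] by linarith
  then show "\<forall>\<^sub>F t in sequentially. a < potential sstar - potential (X t)"
    by (intro always_eventually allI)
next
  fix e :: real assume e: "0 < e"
  define K where "K = (m * perturb_const)\<^sup>2 * L * total_demand"
  have "\<forall>t. potential (X t) \<le> potential sstar"
    using potential_X_le by blast
  then obtain P where "(\<lambda>t. potential (X t)) \<longlonglongrightarrow> P"
    using incseq_convergent[OF incseq_potential_X] by blast
  then have "(\<lambda>t. potential (X (t + L)) - potential (X t)) \<longlonglongrightarrow> P - P"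
    by (intro tendsto_diff LIMSEQ_ignore_initial_segment)
  then have "(\<lambda>t. K * (potential (X (t + L)) - potential (X t))) \<longlonglongrightarrow> 0"
    by (intro tendsto_mult_right_zero) simp
  then have "\<forall>\<^sub>F t in sequentially. K * (potential (X (t + L)) - potential (X t)) < \<alpha> * e\<^sup>2"
    by (rule order_tendstoD(2)) (use e step_size in simp)
  then obtain T where T: "\<And>t. t \<ge> T \<Longrightarrow> K * (potential (X (t + L)) - potential (X t)) < \<alpha> * e\<^sup>2"
    by (auto simp: eventually_sequentially)
  obtain t where t: "t \<ge> T" "\<forall>i<m. \<exists>l<L. \<omega> (t + l) = i"
    using windows by blast
  have "\<alpha> * (potential sstar - potential (X t))\<^sup>2 < \<alpha> * e\<^sup>2"
    using gap_sq_le_window_gain[of L t] t T[OF t(1)] by (simp add: K_def)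
  then have "(potential sstar - potential (X t))\<^sup>2 < e\<^sup>2"
    using step_size by simp
  then have "potential sstar - potential (X t) < e"
    by (rule power_less_imp_less_base) (use e in linarith)
  then have "potential sstar - potential (X t') < e" if "t' \<ge> t" for t'
    using incseq_potential_X that by (auto simp: incseq_def intro: le_less_trans[rotated])
  then show "\<forall>\<^sub>F t in sequentially. potential sstar - potential (X t) < e"
    by (auto simp: eventually_sequentially)
qed

lemma X_tendsto_NE:
  assumes windows: "\<And>T. \<exists>t\<ge>T. \<forall>i<m. \<exists>l<L. \<omega> (t + l) = i"
    and i: "i < m" and j: "j < n"
  shows "(\<lambda>t. X t i j) \<longlonglongrightarrow> sstar i j"
proof -
  have bound: "\<bar>X t i j - sstar i j\<bar> \<le> sqrt (2 * d j * (potential sstar - potential (X t)))" for t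
  proof -
    have "(X t i j - sstar i j)\<^sup>2 / (2 * d j) \<le> potential sstar - potential (X t)"
      using quad_ge_entry[OF i j, of "\<lambda>i j. X t i j - sstar i j"]
        potential_le_NE[OF NE X_in_profiles, of t] by simp
    then have "\<bar>X t i j - sstar i j\<bar>\<^sup>2 \<le> 2 * d j * (potential sstar - potential (X t))"
      using demand_pos[OF j] by (simp add: pos_divide_le_eq mult_ac)
    then show ?thesis
      by (rule real_le_rsqrt)
  qed
  then have "\<forall>\<^sub>F t in sequentially.
      norm (X t i j - sstar i j) \<le> sqrt (2 * d j * (potential sstar - potential (X t)))"
    by (intro always_eventually allI) (simp only: real_norm_def)
  moreover have "(\<lambda>t. sqrt (2 * d j * (potential sstar - potential (X t)))) \<longlonglongrightarrow> 0"
    using tendsto_real_sqrt[OF tendsto_mult_right_zero[OF gap_tendsto_zero[OF windows]]] by simp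
  ultimately have "(\<lambda>t. X t i j - sstar i j) \<longlonglongrightarrow> 0"
    by (rule Lim_null_comparison)
  then show ?thesis
    by (rule LIM_zero_cancel)
qed

end

lemma AE_PiM_pmf_in_support:
  fixes \<pi> :: "nat \<Rightarrow> 'a pmf"
  shows "AE \<omega> in PiM UNIV (\<lambda>t. measure_pmf (\<pi> t)). \<forall>t. \<omega> t \<in> set_pmf (\<pi> t)"
  unfolding AE_all_countable
proof
  fix t
  show "AE \<omega> in PiM UNIV (\<lambda>t. measure_pmf (\<pi> t)). \<omega> t \<in> set_pmf (\<pi> t)"
    by (rule AE_PiM_component) (auto simp: prob_space_measure_pmf AE_measure_pmf)
qed

lemma (in prob_space) AE_infinitely_often_indep_events:
  fixes F :: "nat \<Rightarrow> 'a set"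
  assumes indep: "indep_events F UNIV" and p: "0 < p" "\<And>k. p \<le> prob (F k)"
  shows "AE x in M. \<forall>T. \<exists>k\<ge>T. x \<in> F k"
proof -
  have F: "F k \<in> events" for k
    using indep unfolding indep_events_def by blast
  let ?U = "\<lambda>T. \<Union>k\<in>{T..}. F k"
  have "(\<lambda>T. prob (?U T)) \<longlonglongrightarrow> prob (\<Inter>T. ?U T)"
    using F by (intro finite_Lim_measure_decseq decseq_SucI) (auto intro: Suc_leD)
  moreover have "p \<le> prob (?U T)" for T
    using p(2)[of T] finite_measure_mono[of "F T" "?U T"] F by force
  ultimately have "p \<le> prob (\<Inter>T. ?U T)"
    by (intro LIMSEQ_le_const) auto
  then have "prob (\<Inter>T. ?U T) = 1"
    using borel_0_1_law[OF indep] p(1) by auto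
  then have "AE x in M. x \<in> (\<Inter>T. ?U T)"
    by (rule AE_prob_1)
  then show ?thesis
    by (auto elim!: eventually_mono)
qed

lemma PiM_pmf_measure_cylinder:
  fixes \<pi> :: "nat \<Rightarrow> 'a pmf"
  assumes "finite J"
  shows "measure (PiM UNIV (\<lambda>t. measure_pmf (\<pi> t)))
      {\<omega> \<in> space (PiM UNIV (\<lambda>t. measure_pmf (\<pi> t))). \<forall>t\<in>J. \<omega> t = v t}
    = (\<Prod>t\<in>J. pmf (\<pi> t) (v t))"
proof -
  interpret product_prob_space "\<lambda>t. measure_pmf (\<pi> t)" UNIV
    by unfold_locales
  have "emeasure (PiM UNIV (\<lambda>t. measure_pmf (\<pi> t)))
      {\<omega> \<in> space (PiM UNIV (\<lambda>t. measure_pmf (\<pi> t))). \<forall>t\<in>J. \<omega> t \<in> {v t}}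
    = (\<Prod>t\<in>J. emeasure (measure_pmf (\<pi> t)) {v t})"
    using assms by (intro emeasure_PiM_Collect) auto
  also have "\<dots> = ennreal (\<Prod>t\<in>J. pmf (\<pi> t) (v t))"
    by (simp add: emeasure_pmf_single prod_ennreal)
  finally show ?thesis
    by (simp add: emeasure_eq_measure prod_nonneg)
qed

lemma PiM_pmf_indep_cylinders:
  fixes \<pi> :: "nat \<Rightarrow> 'a pmf" and B :: "nat \<Rightarrow> nat set"
  assumes B: "\<And>b. finite (B b)" "disjoint_family B"
  shows "prob_space.indep_events (PiM UNIV (\<lambda>t. measure_pmf (\<pi> t)))
    (\<lambda>b. {\<omega> \<in> space (PiM UNIV (\<lambda>t. measure_pmf (\<pi> t))). \<forall>t\<in>B b. \<omega> t = v t}) UNIV"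
proof -
  interpret product_prob_space "\<lambda>t. measure_pmf (\<pi> t)" UNIV
    by unfold_locales
  let ?P = "PiM UNIV (\<lambda>t. measure_pmf (\<pi> t))"
  let ?F = "\<lambda>b. {\<omega> \<in> space ?P. \<forall>t\<in>B b. \<omega> t = v t}"
  have "?F b \<in> events" for b
  proof -
    have "?F b = prod_emb UNIV (\<lambda>t. measure_pmf (\<pi> t)) (B b) (\<Pi>\<^sub>E t\<in>B b. {v t})"
      unfolding prod_emb_def by (auto simp: PiE_iff space_PiM)
    then show ?thesis
      using B(1) by (auto intro: sets_PiM_I)
  qed
  then show ?thesis
  proof (intro indep_eventsI)
    fix K :: "nat set" assume K: "finite K" "K \<noteq> {}"
    have "prob (\<Inter>b\<in>K. ?F b) = prob {\<omega> \<in> space ?P. \<forall>t\<in>(\<Union>b\<in>K. B b). \<omega> t = v t}"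
      using K(2) by (intro arg_cong[where f = prob]) auto
    also have "\<dots> = (\<Prod>t\<in>(\<Union>b\<in>K. B b). pmf (\<pi> t) (v t))"
      using K(1) B(1) by (intro PiM_pmf_measure_cylinder) auto
    also have "\<dots> = (\<Prod>b\<in>K. \<Prod>t\<in>B b. pmf (\<pi> t) (v t))"
      using K(1) B by (intro prod.UNION_disjoint) (auto simp: disjoint_family_on_def)
    finally show "prob (\<Inter>b\<in>K. ?F b) = (\<Prod>b\<in>K. prob (?F b))"
      using B(1) by (simp add: PiM_pmf_measure_cylinder)
  qed auto
qed

(* The events that the block [b k, b k + k) spells the word are independent, each of
   probability at least p ^ k. *)
lemma AE_PiM_pmf_pattern_infinitely_often:
  fixes \<pi> :: "nat \<Rightarrow> 'a pmf" and w :: "nat \<Rightarrow> 'a"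
  assumes p: "0 < p" "\<And>t l. l < k \<Longrightarrow> p \<le> pmf (\<pi> t) (w l)"
  shows "AE \<omega> in PiM UNIV (\<lambda>t. measure_pmf (\<pi> t)). \<forall>T. \<exists>t\<ge>T. \<forall>l<k. \<omega> (t + l) = w l"
proof (cases "k = 0")
  case True
  then show ?thesis by auto
next
  case False
  interpret product_prob_space "\<lambda>t. measure_pmf (\<pi> t)" UNIV
    by unfold_locales
  let ?P = "PiM UNIV (\<lambda>t. measure_pmf (\<pi> t))"
  define B where "B b = {b * k ..< b * k + k}" for b
  define F where "F b = {\<omega> \<in> space ?P. \<forall>t\<in>B b. \<omega> t = w (t mod k)}" for b
  have "disjoint_family B"
  proof -
    have "t div k = b" if "t \<in> B b" for t b
      using that unfolding B_def by (intro div_nat_eqI) (auto simp: algebra_simps)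
    then show ?thesis
      unfolding disjoint_family_on_def by blast
  qed
  then have "indep_events F UNIV"
    unfolding F_def by (intro PiM_pmf_indep_cylinders) (simp add: B_def)
  moreover have "p ^ k \<le> prob (F b)" for b
  proof -
    have "(\<Prod>t\<in>B b. p) \<le> (\<Prod>t\<in>B b. pmf (\<pi> t) (w (t mod k)))"
      using p False by (intro prod_mono) auto
    then show ?thesis
      by (simp add: F_def B_def PiM_pmf_measure_cylinder)
  qed
  ultimately have "AE \<omega> in ?P. \<forall>T. \<exists>b\<ge>T. \<omega> \<in> F b"
    using p(1) by (intro AE_infinitely_often_indep_events[where p = "p ^ k"]) auto
  then show ?thesis
  proof (rule eventually_mono, intro allI)
    fix \<omega> T assume "\<forall>T. \<exists>b\<ge>T. \<omega> \<in> F b"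
    then obtain b where b: "b \<ge> T" "\<omega> \<in> F b"
      by blast
    have "b \<le> b * k"
      using False by (cases k) simp_all
    then have "T \<le> b * k"
      using b(1) by linarith
    moreover have "\<forall>l<k. \<omega> (b * k + l) = w l"
      using b(2) by (auto simp: F_def B_def)
    ultimately show "\<exists>t\<ge>T. \<forall>l<k. \<omega> (t + l) = w l"
      by blast
  qed
qed

theorem theorem4p4:
  fixes m n :: nat and c d :: "nat \<Rightarrow> real" and rmax rmin \<alpha> pmin :: real
    and \<pi> :: "nat \<Rightarrow> nat pmf"
    and sel :: "nat \<Rightarrow> (nat \<Rightarrow> nat \<Rightarrow> real) \<Rightarrow> nat \<Rightarrow> nat \<Rightarrow> real"
    and s1 sstar :: "nat \<Rightarrow> nat \<Rightarrow> real"
  assumes G: "lending_game m n c d rmax rmin"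
    and alpha: "0 < \<alpha>" "\<alpha> \<le> 1"
    and s1: "s1 \<in> profiles m n c"
    and pi_support: "\<And>t. set_pmf (\<pi> t) \<subseteq> {..<m}"
    and pmin: "0 < pmin" "\<And>t i. i < m \<Longrightarrow> pmin \<le> pmf (\<pi> t) i"
    and sel: "\<And>t s i. s \<in> profiles m n c \<Longrightarrow> i < m \<Longrightarrow>
                 sel t s i \<in> best_responses m n c d rmax rmin i s"
    and NE: "is_pure_NE m n c d rmax rmin sstar"
  shows "AE \<omega> in (PiM UNIV (\<lambda>t. measure_pmf (\<pi> t))).
           (\<forall>i<m. \<forall>j<n. (\<lambda>t. br_dynamics \<alpha> sel s1 \<omega> t i j) \<longlonglongrightarrow> sstar i j)"
proof -
  have "AE \<omega> in PiM UNIV (\<lambda>t. measure_pmf (\<pi> t)). \<forall>t. \<omega> t \<in> set_pmf (\<pi> t)"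
    by (rule AE_PiM_pmf_in_support)
  moreover have "AE \<omega> in PiM UNIV (\<lambda>t. measure_pmf (\<pi> t)). \<forall>T. \<exists>t\<ge>T. \<forall>l<m. \<omega> (t + l) = l"
    using pmin by (intro AE_PiM_pmf_pattern_infinitely_often[where w = "\<lambda>l. l"])
  ultimately show ?thesis
  proof eventually_elim
    case (elim \<omega>)
    have "\<omega> t < m" for t
      using elim(1) pi_support by blast
    then interpret br_trajectory m n c d rmax rmin \<alpha> sel s1 sstar \<omega>
      using G alpha s1 sel NE by unfold_locales auto
    have "\<exists>t\<ge>T. \<forall>i<m. \<exists>l<m. \<omega> (t + l) = i" for T
      using elim(2) by blast
    then show ?case
      using X_tendsto_NE by blast
  qed
qed

end
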